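(* For $n\ge 1$, let $\operatorname{NE}_n(k)$ denote the number of permutations $\sigma\in\mathfrak{S}_n$ with nesting number $\operatorname{Ne}(\sigma)=k$. Then \[\operatorname{NE}_n(\lceil n/2\rceil)=\begin{cases} m! & \text{if } n=2m+1,\\ 2(m+1)!-(m-1)!-1 & \text{if } n=2m.\end{cases}\]
   Context: For $\sigma\in\mathfrak{S}_n$, the arcs of $\sigma$ are the pairs $(a,\sigma(a))$, $1\le a\le n$. A $k$-nesting of $\sigma$ is a set of $k$ arcs $\{(a_i,\sigma(a_i)):1\le i\le k\}$ satisfying either $a_1<a_2<\dots<a_k\le\sigma(a_k)<\dots<\sigma(a_2)<\sigma(a_1)$ (upper $k$-nesting; loops $a=\sigma(a)$ are allowed) or $\sigma(a_1)<\sigma(a_2)<\dots<\sigma(a_k)<a_k<\dots<a_2<a_1$ (lower $k$-nesting). The nesting number $\operatorname{Ne}(\sigma)$ is the largest $k$ such that $\sigma$ has a $k$-nesting. *)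

theory Defs
  imports "HOL-Combinatorics.Permutations"
begin

definition upper_nesting :: "nat \<Rightarrow> (nat \<Rightarrow> nat) \<Rightarrow> nat \<Rightarrow> (nat \<Rightarrow> nat) \<Rightarrow> bool" where
  "upper_nesting n \<sigma> k a \<longleftrightarrow> k \<ge> 1 \<and> (\<forall>i<k. a i \<in> {1..n}) \<and>
     (\<forall>i. Suc i < k \<longrightarrow> a i < a (Suc i) \<and> \<sigma> (a (Suc i)) < \<sigma> (a i)) \<and>
     a (k - 1) \<le> \<sigma> (a (k - 1))"

definition lower_nesting :: "nat \<Rightarrow> (nat \<Rightarrow> nat) \<Rightarrow> nat \<Rightarrow> (nat \<Rightarrow> nat) \<Rightarrow> bool" where
  "lower_nesting n \<sigma> k a \<longleftrightarrow> k \<ge> 1 \<and> (\<forall>i<k. a i \<in> {1..n}) \<and>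
     (\<forall>i. Suc i < k \<longrightarrow> \<sigma> (a i) < \<sigma> (a (Suc i)) \<and> a (Suc i) < a i) \<and>
     \<sigma> (a (k - 1)) < a (k - 1)"

definition has_nesting :: "nat \<Rightarrow> (nat \<Rightarrow> nat) \<Rightarrow> nat \<Rightarrow> bool" where
  "has_nesting n \<sigma> k \<longleftrightarrow> (\<exists>a. upper_nesting n \<sigma> k a \<or> lower_nesting n \<sigma> k a)"

definition nesting_number :: "nat \<Rightarrow> (nat \<Rightarrow> nat) \<Rightarrow> nat" where
  "nesting_number n \<sigma> = Max {k. has_nesting n \<sigma> k}"

definition NE :: "nat \<Rightarrow> nat \<Rightarrow> nat" where
  "NE n k = card {\<sigma>. \<sigma> permutes {1..n} \<and> nesting_number n \<sigma> = k}"

end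

theory Submission
  imports Defs
begin

text \<open>An upper \<open>k\<close>-nesting uses at least \<open>2k - 1\<close> distinct endpoints (its innermost arc may be
  a loop) and a lower one at least \<open>2k\<close>; hence \<open>Ne(\<sigma>) \<le> \<lceil>n/2\<rceil>\<close>. For \<open>n = 2m + 1\<close> a
  maximal nesting is forced to be \<open>j \<mapsto> n + 1 - j\<close> on \<open>{1..m+1}\<close>, which leaves \<open>m!\<close>
  permutations. For \<open>n = 2m\<close> a maximal nesting is either that upper reversal on \<open>{1..m}\<close>, or
  the lower reversal, or an upper nesting ending in a loop whose \<open>2m - 1\<close> endpoints are all of
  \<open>{1..2m}\<close> except one point \<open>x\<close>. Each of these \<open>2m + 2\<close> families has \<open>m!\<close> members; they
  are pairwise disjoint except that the two reversals share one permutation and the families for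
  \<open>x = m\<close> and \<open>x = m + 1\<close> share \<open>(m - 1)!\<close>, giving \<open>(2m + 2) m! - (m - 1)! - 1\<close>.\<close>

subsection \<open>Permutations with prescribed values\<close>

lemma permutes_extending_exists:
  assumes fin: "finite S" and AS: "A \<subseteq> S" and inj: "inj_on f A" and fA: "f ` A \<subseteq> S"
  obtains s where "s permutes S" and "\<forall>i\<in>A. s i = f i"
proof -
  have finA: "finite A" using fin AS finite_subset by blast
  have "card (S - A) = card (S - f ` A)"
    using AS fA finA inj by (simp add: card_Diff_subset card_image)
  then obtain g where g: "bij_betw g (S - A) (S - f ` A)"
    using finite_same_card_bij fin by blast
  define s where "s i = (if i \<in> A then f i else if i \<in> S then g i else i)" for i
  have "bij_betw s A (f ` A)"
    using inj unfolding s_def by (simp add: bij_betw_def inj_on_def image_def)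
  moreover have "bij_betw s (S - A) (S - f ` A)"
    using g by (rule bij_betw_cong[THEN iffD1, rotated]) (simp add: s_def)
  ultimately have "bij_betw s (A \<union> (S - A)) (f ` A \<union> (S - f ` A))"
    by (rule bij_betw_combine) auto
  moreover have "A \<union> (S - A) = S" "f ` A \<union> (S - f ` A) = S" using AS fA by auto
  ultimately have "bij_betw s S S" by simp
  then have "s permutes S"
    by (rule bij_imp_permutes) (use AS in \<open>auto simp: s_def\<close>)
  then show ?thesis using that by (simp add: s_def)
qed

text \<open>Composing with one fixed extension identifies the extensions with the permutations of
  \<open>S - A\<close>.\<close>

lemma card_permutes_extending:
  assumes fin: "finite S" and AS: "A \<subseteq> S" and inj: "inj_on f A" and fA: "f ` A \<subseteq> S"
  shows "card {\<sigma>. \<sigma> permutes S \<and> (\<forall>i\<in>A. \<sigma> i = f i)} = fact (card S - card A)"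
proof -
  obtain s where s: "s permutes S" and sA: "\<forall>i\<in>A. s i = f i"
    using permutes_extending_exists[OF assms] .
  have eq: "{\<sigma>. \<sigma> permutes S \<and> (\<forall>i\<in>A. \<sigma> i = f i)} = (\<lambda>\<tau>. s \<circ> \<tau>) ` {\<tau>. \<tau> permutes (S - A)}"
  proof (intro set_eqI iffI)
    fix \<sigma> assume "\<sigma> \<in> {\<sigma>. \<sigma> permutes S \<and> (\<forall>i\<in>A. \<sigma> i = f i)}"
    then have \<sigma>: "\<sigma> permutes S" and \<sigma>A: "\<forall>i\<in>A. \<sigma> i = f i" by auto
    define \<tau> where "\<tau> = inv s \<circ> \<sigma>"
    have "\<tau> permutes S" unfolding \<tau>_def using \<sigma> s by (simp add: permutes_compose permutes_inv)
    moreover have "\<tau> i = i" if "i \<in> A" for i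
      using \<sigma>A sA that permutes_inverses(2)[OF s] unfolding \<tau>_def by (metis comp_apply)
    ultimately have "\<tau> permutes (S - A)"
      unfolding permutes_def by (metis Diff_iff)
    moreover have "\<sigma> = s \<circ> \<tau>" unfolding \<tau>_def using permutes_inverses(1)[OF s] by (simp add: fun_eq_iff)
    ultimately show "\<sigma> \<in> (\<lambda>\<tau>. s \<circ> \<tau>) ` {\<tau>. \<tau> permutes (S - A)}" by auto
  next
    fix \<sigma> assume "\<sigma> \<in> (\<lambda>\<tau>. s \<circ> \<tau>) ` {\<tau>. \<tau> permutes (S - A)}"
    then obtain \<tau> where \<tau>: "\<tau> permutes (S - A)" and \<sigma>: "\<sigma> = s \<circ> \<tau>" by auto
    have "\<sigma> permutes S" using \<sigma> s permutes_compose permutes_subset[OF \<tau>] by blast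
    moreover have "\<forall>i\<in>A. \<sigma> i = f i" using \<sigma> sA permutes_not_in[OF \<tau>] by simp
    ultimately show "\<sigma> \<in> {\<sigma>. \<sigma> permutes S \<and> (\<forall>i\<in>A. \<sigma> i = f i)}" by auto
  qed
  have "inj_on (\<lambda>\<tau>. s \<circ> \<tau>) {\<tau>. \<tau> permutes (S - A)}"
    using permutes_inj[OF s] by (auto intro!: inj_onI simp: fun_eq_iff inj_eq)
  then have "card {\<sigma>. \<sigma> permutes S \<and> (\<forall>i\<in>A. \<sigma> i = f i)} = card {\<tau>. \<tau> permutes (S - A)}"
    by (simp add: eq card_image)
  also have "\<dots> = fact (card S - card A)"
    using card_permutations[of "S - A"] fin AS finite_subset[OF AS fin] by (simp add: card_Diff_subset)
  finally show ?thesis .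
qed

lemma card_permutes_mapping:
  assumes fin: "finite S" and gJ: "g ` J \<subseteq> S" and hJ: "h ` J \<subseteq> S"
    and inj_g: "inj_on g J" and inj_h: "inj_on h J"
  shows "card {\<sigma>. \<sigma> permutes S \<and> (\<forall>j\<in>J. \<sigma> (g j) = h j)} = fact (card S - card J)"
proof -
  have "{\<sigma>. \<sigma> permutes S \<and> (\<forall>j\<in>J. \<sigma> (g j) = h j)}
      = {\<sigma>. \<sigma> permutes S \<and> (\<forall>i\<in>g ` J. \<sigma> i = (h \<circ> inv_into J g) i)}"
    using inj_g by auto
  also have "card \<dots> = fact (card S - card (g ` J))"
  proof (rule card_permutes_extending[OF fin gJ])
    show "inj_on (h \<circ> inv_into J g) (g ` J)"
      using inj_h inj_g by (simp add: comp_inj_on inj_on_inv_into inv_into_image_cancel)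
    show "(h \<circ> inv_into J g) ` g ` J \<subseteq> S" using hJ inj_g by auto
  qed
  also have "card (g ` J) = card J" using inj_g by (simp add: card_image)
  finally show ?thesis .
qed

subsection \<open>Size of a nesting\<close>

lemma strict_chain_increase:
  assumes "\<forall>i. Suc i < k \<longrightarrow> f i < (f (Suc i) :: nat)" "j < k" "i \<le> j"
  shows "f i + (j - i) \<le> f j"
  using assms(2,3)
proof (induction j)
  case (Suc j)
  show ?case
  proof (cases "i = Suc j")
    case False
    then have "f i + (j - i) \<le> f j" using Suc by simp
    moreover have "f j < f (Suc j)" using assms(1) Suc.prems by simp
    ultimately show ?thesis using False Suc.prems by linarith
  qed simp
qed simp

lemma strict_chain_decrease:
  assumes "\<forall>i. Suc i < k \<longrightarrow> f (Suc i) < (f i :: nat)" "j < k" "i \<le> j"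
  shows "f j + (j - i) \<le> f i"
  using assms(2,3)
proof (induction j)
  case (Suc j)
  show ?case
  proof (cases "i = Suc j")
    case False
    then have "f j + (j - i) \<le> f i" using Suc by simp
    moreover have "f (Suc j) < f j" using assms(1) Suc.prems by simp
    ultimately show ?thesis using False Suc.prems by linarith
  qed simp
qed simp

lemma upper_nesting_bounds:
  assumes "upper_nesting n \<sigma> k a" "\<sigma> permutes {1..n}" "i \<le> j" "j < k"
  shows "a i + (j - i) \<le> a j" "\<sigma> (a j) + (j - i) \<le> \<sigma> (a i)"
    "1 \<le> a i" "a i \<le> n" "1 \<le> \<sigma> (a i)" "\<sigma> (a i) \<le> n"
proof -
  have inc: "\<forall>i. Suc i < k \<longrightarrow> a i < a (Suc i)"
    and dec: "\<forall>i. Suc i < k \<longrightarrow> (\<sigma> \<circ> a) (Suc i) < (\<sigma> \<circ> a) i"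
    using assms(1) unfolding upper_nesting_def by auto
  show "a i + (j - i) \<le> a j" using strict_chain_increase[OF inc assms(4,3)] .
  show "\<sigma> (a j) + (j - i) \<le> \<sigma> (a i)" using strict_chain_decrease[OF dec assms(4,3)] by simp
  have "a i \<in> {1..n}" using assms(1,3,4) unfolding upper_nesting_def by auto
  then show "1 \<le> a i" "a i \<le> n" "1 \<le> \<sigma> (a i)" "\<sigma> (a i) \<le> n"
    using permutes_in_image[OF assms(2)] by auto
qed

lemma lower_nesting_bounds:
  assumes "lower_nesting n \<sigma> k a" "\<sigma> permutes {1..n}" "i \<le> j" "j < k"
  shows "\<sigma> (a i) + (j - i) \<le> \<sigma> (a j)" "a j + (j - i) \<le> a i"
    "1 \<le> a i" "a i \<le> n" "1 \<le> \<sigma> (a i)" "\<sigma> (a i) \<le> n"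
proof -
  have dec: "\<forall>i. Suc i < k \<longrightarrow> a (Suc i) < a i"
    and inc: "\<forall>i. Suc i < k \<longrightarrow> (\<sigma> \<circ> a) i < (\<sigma> \<circ> a) (Suc i)"
    using assms(1) unfolding lower_nesting_def by auto
  show "a j + (j - i) \<le> a i" using strict_chain_decrease[OF dec assms(4,3)] .
  show "\<sigma> (a i) + (j - i) \<le> \<sigma> (a j)" using strict_chain_increase[OF inc assms(4,3)] by simp
  have "a i \<in> {1..n}" using assms(1,3,4) unfolding lower_nesting_def by auto
  then show "1 \<le> a i" "a i \<le> n" "1 \<le> \<sigma> (a i)" "\<sigma> (a i) \<le> n"
    using permutes_in_image[OF assms(2)] by auto
qed

lemma upper_nesting_size:
  assumes "upper_nesting n \<sigma> k a" "\<sigma> permutes {1..n}"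
  shows "2 * k \<le> n + 1"
proof -
  have k: "k \<ge> 1" and "a (k - 1) \<le> \<sigma> (a (k - 1))"
    using assms(1) unfolding upper_nesting_def by auto
  then show ?thesis using upper_nesting_bounds[OF assms, of 0 "k - 1"] by linarith
qed

lemma lower_nesting_size:
  assumes "lower_nesting n \<sigma> k a" "\<sigma> permutes {1..n}"
  shows "2 * k \<le> n"
proof -
  have k: "k \<ge> 1" and "\<sigma> (a (k - 1)) < a (k - 1)"
    using assms(1) unfolding lower_nesting_def by auto
  then show ?thesis using lower_nesting_bounds[OF assms, of 0 "k - 1"] by linarith
qed

text \<open>The third hypothesis says that the size bound is attained: \<open>2k - 1\<close> endpoints, or \<open>2k\<close>
  when the innermost arc is not a loop.\<close>

lemma upper_nesting_tight:
  assumes u: "upper_nesting n \<sigma> k a" and p: "\<sigma> permutes {1..n}"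
    and tight: "n + 1 \<le> 2 * k \<or> n \<le> 2 * k \<and> a (k - 1) < \<sigma> (a (k - 1))" and j: "j < k"
  shows "a j = j + 1" "\<sigma> (a j) = n - j"
proof -
  have "a (k - 1) \<le> \<sigma> (a (k - 1))" using u unfolding upper_nesting_def by auto
  moreover have "a 0 + j \<le> a j" "\<sigma> (a j) + j \<le> \<sigma> (a 0)" "1 \<le> a 0" "\<sigma> (a 0) \<le> n"
    using upper_nesting_bounds[OF u p, of 0 j] j by auto
  moreover have "a j + (k - 1 - j) \<le> a (k - 1)" "\<sigma> (a (k - 1)) + (k - 1 - j) \<le> \<sigma> (a j)"
    using upper_nesting_bounds[OF u p, of j "k - 1"] j by auto
  ultimately show "a j = j + 1" "\<sigma> (a j) = n - j" using tight j by linarith+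
qed

lemma lower_nesting_tight:
  assumes l: "lower_nesting n \<sigma> k a" and p: "\<sigma> permutes {1..n}"
    and tight: "n \<le> 2 * k" and j: "j < k"
  shows "a j = n - j" "\<sigma> (a j) = j + 1"
proof -
  have "\<sigma> (a (k - 1)) < a (k - 1)" using l unfolding lower_nesting_def by auto
  moreover have "\<sigma> (a 0) + j \<le> \<sigma> (a j)" "a j + j \<le> a 0" "1 \<le> \<sigma> (a 0)" "a 0 \<le> n"
    using lower_nesting_bounds[OF l p, of 0 j] j by auto
  moreover have "\<sigma> (a j) + (k - 1 - j) \<le> \<sigma> (a (k - 1))" "a (k - 1) + (k - 1 - j) \<le> a j"
    using lower_nesting_bounds[OF l p, of j "k - 1"] j by auto
  ultimately show "a j = n - j" "\<sigma> (a j) = j + 1" using tight j by linarith+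
qed

lemma has_nesting_le:
  assumes "has_nesting n \<sigma> k" "\<sigma> permutes {1..n}"
  shows "k \<le> (n + 1) div 2"
  using assms upper_nesting_size lower_nesting_size unfolding has_nesting_def by fastforce

lemma has_nesting_one:
  assumes "\<sigma> permutes {1..n}" "n \<ge> 1"
  shows "has_nesting n \<sigma> 1"
proof -
  have "\<sigma> 1 \<in> {1..n}" using permutes_in_image[OF assms(1)] assms(2) by auto
  then have "upper_nesting n \<sigma> 1 (\<lambda>_. 1)" using assms(2) unfolding upper_nesting_def by auto
  then show ?thesis unfolding has_nesting_def by blast
qed

lemma nesting_number_eq_max_iff:
  assumes "\<sigma> permutes {1..n}" "n \<ge> 1"
  shows "nesting_number n \<sigma> = (n + 1) div 2 \<longleftrightarrow> has_nesting n \<sigma> ((n + 1) div 2)"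
proof -
  let ?K = "{k. has_nesting n \<sigma> k}"
  have sub: "?K \<subseteq> {..(n + 1) div 2}" using has_nesting_le[OF _ assms(1)] by auto
  then have fin: "finite ?K" using finite_subset by blast
  have ne: "?K \<noteq> {}" using has_nesting_one[OF assms] by auto
  show ?thesis
  proof
    assume "nesting_number n \<sigma> = (n + 1) div 2"
    then show "has_nesting n \<sigma> ((n + 1) div 2)"
      using Max_in[OF fin ne] unfolding nesting_number_def by simp
  next
    assume "has_nesting n \<sigma> ((n + 1) div 2)"
    then show "nesting_number n \<sigma> = (n + 1) div 2"
      unfolding nesting_number_def by (intro Max_eqI[OF fin]) (use sub in auto)
  qed
qed

lemma NE_max_eq_card:
  assumes "n \<ge> 1"
  shows "NE n ((n + 1) div 2) = card {\<sigma>. \<sigma> permutes {1..n} \<and> has_nesting n \<sigma> ((n + 1) div 2)}"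
  unfolding NE_def using nesting_number_eq_max_iff[OF _ assms] by (metis (lifting))

subsection \<open>Odd length\<close>

lemma has_nesting_odd_max_iff:
  assumes p: "\<sigma> permutes {1..2 * m + 1}"
  shows "has_nesting (2 * m + 1) \<sigma> (m + 1) \<longleftrightarrow> (\<forall>j\<in>{1..m + 1}. \<sigma> j = 2 * m + 2 - j)"
proof
  assume "has_nesting (2 * m + 1) \<sigma> (m + 1)"
  then obtain a where u: "upper_nesting (2 * m + 1) \<sigma> (m + 1) a"
    unfolding has_nesting_def using lower_nesting_size[OF _ p] by fastforce
  show "\<forall>j\<in>{1..m + 1}. \<sigma> j = 2 * m + 2 - j"
  proof
    fix j assume "j \<in> {1..m + 1}"
    then obtain i where i: "j = Suc i" "i < m + 1" by (cases j) auto
    have "a i = Suc i" "\<sigma> (a i) = 2 * m + 1 - i"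
      using upper_nesting_tight[OF u p _ i(2)] by simp_all
    then show "\<sigma> j = 2 * m + 2 - j" using i by simp
  qed
next
  assume h: "\<forall>j\<in>{1..m + 1}. \<sigma> j = 2 * m + 2 - j"
  have "upper_nesting (2 * m + 1) \<sigma> (m + 1) (\<lambda>j. j + 1)"
    unfolding upper_nesting_def using h by auto
  then show "has_nesting (2 * m + 1) \<sigma> (m + 1)" unfolding has_nesting_def by blast
qed

lemma NE_odd_max: "NE (2 * m + 1) (m + 1) = fact m"
proof -
  have "NE (2 * m + 1) (m + 1)
      = card {\<sigma>. \<sigma> permutes {1..2 * m + 1} \<and> has_nesting (2 * m + 1) \<sigma> (m + 1)}"
    using NE_max_eq_card[of "2 * m + 1"] by simp
  also have "\<dots> = card {\<sigma>. \<sigma> permutes {1..2 * m + 1} \<and> (\<forall>j\<in>{1..m + 1}. \<sigma> j = 2 * m + 2 - j)}"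
    using has_nesting_odd_max_iff by (intro arg_cong[where f = card]) blast
  also have "\<dots> = fact (card {1..2 * m + 1} - card {1..m + 1})"
    by (rule card_permutes_extending) (auto simp: inj_on_def)
  finally show ?thesis by simp
qed

subsection \<open>Even length\<close>

text \<open>For \<open>j \<ge> 1\<close>, \<open>skip x j\<close> is the \<open>j\<close>-th positive integer different from \<open>x\<close>.\<close>

definition skip :: "nat \<Rightarrow> nat \<Rightarrow> nat" where
  "skip x j = (if j < x then j else Suc j)"

lemma skip_strict_mono: "i < j \<Longrightarrow> skip x i < skip x j"
  by (auto simp: skip_def)

lemma inj_skip: "inj (skip x)"
  by (auto intro!: injI simp: skip_def split: if_splits)

lemma skip_bounds: "j \<le> skip x j" "skip x j \<le> Suc j"
  by (auto simp: skip_def)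

text \<open>A strictly increasing sequence of \<open>K\<close> values in \<open>{1..K+1}\<close> misses exactly one value \<open>x\<close>:
  it agrees with \<open>b j = j + 1\<close> before the first index where it jumps to \<open>j + 2\<close>, and with
  \<open>b j = j + 2\<close> from there on.\<close>

lemma strict_chain_eq_skip:
  assumes inc: "\<forall>j. Suc j < K \<longrightarrow> b j < (b (Suc j) :: nat)"
    and range: "\<forall>j<K. 1 \<le> b j \<and> b j \<le> Suc K" and K: "K \<ge> 1"
  obtains x where "x \<in> {1..Suc K}" "\<forall>j<K. b j = skip x (Suc j)"
proof -
  have lo: "j + 1 \<le> b j" if "j < K" for j
    using strict_chain_increase[OF inc that, of 0] range that by auto
  have hi: "b j \<le> j + 2" if "j < K" for j
  proof -
    have "b j + (K - 1 - j) \<le> b (K - 1)" using strict_chain_increase[OF inc, of "K - 1" j] that K by auto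
    moreover have "b (K - 1) \<le> Suc K" using range K by auto
    ultimately show ?thesis using that by linarith
  qed
  have jumped: "b j' = j' + 2" if "b j = j + 2" "j \<le> j'" "j' < K" for j j'
    using strict_chain_increase[OF inc that(3,2)] that hi[of j'] by auto
  let ?J = "{j. j < K \<and> b j = j + 2}"
  show ?thesis
  proof (cases "?J = {}")
    case True
    then show ?thesis using lo hi by (intro that[of "Suc K"]) (force simp: skip_def)+
  next
    case False
    define l where "l = Min ?J"
    have "finite ?J" by auto
    then have l: "l \<in> ?J" "\<And>j. j \<in> ?J \<Longrightarrow> l \<le> j"
      using Min_in False Min_le unfolding l_def by blast+
    show ?thesis
    proof (rule that[of "Suc l"])
      show "\<forall>j<K. b j = skip (Suc l) (Suc j)"
      proof (intro allI impI)
        fix j assume j: "j < K"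
        show "b j = skip (Suc l) (Suc j)"
        proof (cases "l \<le> j")
          case True
          then show ?thesis using jumped[of l j] l(1) j by (auto simp: skip_def)
        next
          case False
          then have "b j \<noteq> j + 2" using l(2)[of j] j by auto
          then show ?thesis using lo[OF j] hi[OF j] False by (auto simp: skip_def)
        qed
      qed
    qed (use l in auto)
  qed
qed

definition upper_reversals :: "nat \<Rightarrow> (nat \<Rightarrow> nat) set" where
  "upper_reversals m = {\<sigma>. \<sigma> permutes {1..2 * m} \<and> (\<forall>j\<in>{1..m}. \<sigma> j = 2 * m + 1 - j)}"

definition lower_reversals :: "nat \<Rightarrow> (nat \<Rightarrow> nat) set" where
  "lower_reversals m = {\<sigma>. \<sigma> permutes {1..2 * m} \<and> (\<forall>j\<in>{1..m}. \<sigma> (2 * m + 1 - j) = j)}"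

text \<open>The arcs \<open>skip x j \<mapsto> skip x (2m - j)\<close>, \<open>1 \<le> j \<le> m\<close>, form an upper \<open>m\<close>-nesting whose
  innermost arc is a loop at \<open>skip x m\<close> and whose endpoints are all of \<open>{1..2m}\<close> except \<open>x\<close>.\<close>

definition loop_nestings :: "nat \<Rightarrow> nat \<Rightarrow> (nat \<Rightarrow> nat) set" where
  "loop_nestings m x =
     {\<sigma>. \<sigma> permutes {1..2 * m} \<and> (\<forall>j\<in>{1..m}. \<sigma> (skip x j) = skip x (2 * m - j))}"

lemma loop_nestings_apply:
  "\<sigma> \<in> loop_nestings m x \<Longrightarrow> j \<in> {1..m} \<Longrightarrow> skip x j = u \<Longrightarrow> skip x (2 * m - j) = v \<Longrightarrow> \<sigma> u = v"
  unfolding loop_nestings_def by auto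

text \<open>Reading the left endpoints of such a nesting and then its right endpoints backwards, the
  loop counted once, gives a strictly increasing sequence of \<open>2m - 1\<close> values in \<open>{1..2m}\<close>.\<close>

lemma upper_nesting_loop_merged_chain:
  assumes u: "upper_nesting (2 * m) \<sigma> m a" and p: "\<sigma> permutes {1..2 * m}"
    and loop: "\<sigma> (a (m - 1)) = a (m - 1)"
  defines "b t \<equiv> if t < m then a t else \<sigma> (a (2 * m - 2 - t))"
  shows "\<forall>t. Suc t < 2 * m - 1 \<longrightarrow> b t < b (Suc t)"
    and "\<forall>t<2 * m - 1. 1 \<le> b t \<and> b t \<le> Suc (2 * m - 1)"
proof -
  note bounds = upper_nesting_bounds[OF u p]
  show "\<forall>t. Suc t < 2 * m - 1 \<longrightarrow> b t < b (Suc t)"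
  proof (intro allI impI)
    fix t assume t: "Suc t < 2 * m - 1"
    consider "Suc t < m" | "Suc t = m" | "t \<ge> m" by linarith
    then show "b t < b (Suc t)"
    proof cases
      case 1
      then show ?thesis using bounds(1)[of t "Suc t"] by (simp add: b_def)
    next
      case 2
      then show ?thesis using bounds(2)[of "m - 2" "m - 1"] t loop by (auto simp: b_def)
    next
      case 3
      have "\<sigma> (a (2 * m - 2 - t)) + ((2 * m - 2 - t) - (2 * m - 2 - Suc t)) \<le> \<sigma> (a (2 * m - 2 - Suc t))"
        using bounds(2)[of "2 * m - 2 - Suc t" "2 * m - 2 - t"] 3 t by auto
      then show ?thesis using 3 t by (auto simp: b_def)
    qed
  qed
  show "\<forall>t<2 * m - 1. 1 \<le> b t \<and> b t \<le> Suc (2 * m - 1)"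
  proof (intro allI impI)
    fix t assume "t < 2 * m - 1"
    then show "1 \<le> b t \<and> b t \<le> Suc (2 * m - 1)"
      using bounds(3-6)[of t t] bounds(3-6)[of "2 * m - 2 - t" "2 * m - 2 - t"] by (auto simp: b_def)
  qed
qed

lemma upper_nesting_loop_in_loop_nestings:
  assumes u: "upper_nesting (2 * m) \<sigma> m a" and p: "\<sigma> permutes {1..2 * m}" and m: "m \<ge> 1"
    and loop: "\<sigma> (a (m - 1)) = a (m - 1)"
  obtains x where "x \<in> {1..2 * m}" "\<sigma> \<in> loop_nestings m x"
proof -
  define b where "b t = (if t < m then a t else \<sigma> (a (2 * m - 2 - t)))" for t
  have "2 * m - 1 \<ge> 1" using m by simp
  then obtain x where x: "x \<in> {1..Suc (2 * m - 1)}" and bx: "\<forall>t<2 * m - 1. b t = skip x (Suc t)"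
    using strict_chain_eq_skip[OF upper_nesting_loop_merged_chain[OF u p loop, folded b_def]] by blast
  have "\<sigma> (skip x j) = skip x (2 * m - j)" if j: "j \<in> {1..m}" for j
  proof -
    obtain i where i: "j = Suc i" "i < m" using j by (cases j) auto
    have left: "skip x j = a i" using bx[rule_format, of i] i by (simp add: b_def)
    have right: "skip x (2 * m - j) = b (2 * m - 1 - j)"
      using bx[rule_format, of "2 * m - 1 - j"] i m by (simp add: Suc_diff_Suc)
    show ?thesis
    proof (cases "j = m")
      case True
      then show ?thesis using left right loop i by (simp add: b_def)
    next
      case False
      then have "2 * m - 2 - (2 * m - 1 - j) = i" "\<not> 2 * m - 1 - j < m" using i by auto
      then show ?thesis using left right by (simp add: b_def)
    qed
  qed
  then show ?thesis using that[of x] x m p by (auto simp: loop_nestings_def)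
qed

lemma upper_nesting_even_max_cases:
  assumes u: "upper_nesting (2 * m) \<sigma> m a" and p: "\<sigma> permutes {1..2 * m}" and m: "m \<ge> 1"
  shows "\<sigma> \<in> upper_reversals m \<or> (\<exists>x\<in>{1..2 * m}. \<sigma> \<in> loop_nestings m x)"
proof (cases "a (m - 1) < \<sigma> (a (m - 1))")
  case True
  have "\<sigma> j = 2 * m + 1 - j" if j: "j \<in> {1..m}" for j
  proof -
    obtain i where i: "j = Suc i" "i < m" using j by (cases j) auto
    then have "a i = Suc i" "\<sigma> (a i) = 2 * m - i"
      using upper_nesting_tight[OF u p _ i(2)] True by simp_all
    then show ?thesis using i by simp
  qed
  then show ?thesis using p by (simp add: upper_reversals_def)
next
  case False
  then have "\<sigma> (a (m - 1)) = a (m - 1)" using u unfolding upper_nesting_def by auto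
  then show ?thesis using upper_nesting_loop_in_loop_nestings[OF u p m] by blast
qed

lemma lower_nesting_even_max:
  assumes l: "lower_nesting (2 * m) \<sigma> m a" and p: "\<sigma> permutes {1..2 * m}"
  shows "\<sigma> \<in> lower_reversals m"
proof -
  have "\<sigma> (2 * m + 1 - j) = j" if j: "j \<in> {1..m}" for j
  proof -
    obtain i where i: "j = Suc i" "i < m" using j by (cases j) auto
    then have "a i = 2 * m - i" "\<sigma> (a i) = Suc i"
      using lower_nesting_tight[OF l p _ i(2)] by simp_all
    then show ?thesis using i by simp
  qed
  then show ?thesis using p by (simp add: lower_reversals_def)
qed

lemma has_nesting_upper_reversal:
  assumes "\<sigma> \<in> upper_reversals m" "m \<ge> 1"
  shows "has_nesting (2 * m) \<sigma> m"
proof -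
  have "upper_nesting (2 * m) \<sigma> m (\<lambda>j. j + 1)"
    using assms unfolding upper_nesting_def upper_reversals_def by auto
  then show ?thesis unfolding has_nesting_def by blast
qed

lemma has_nesting_lower_reversal:
  assumes "\<sigma> \<in> lower_reversals m" "m \<ge> 1"
  shows "has_nesting (2 * m) \<sigma> m"
proof -
  have rev: "\<sigma> (2 * m - i) = Suc i" if "i < m" for i
    using assms(1) that unfolding lower_reversals_def by (auto dest: bspec[of _ _ "Suc i"])
  have "lower_nesting (2 * m) \<sigma> m (\<lambda>j. 2 * m - j)"
    unfolding lower_nesting_def
  proof (intro conjI allI impI)
    fix i assume "Suc i < m"
    then show "\<sigma> (2 * m - i) < \<sigma> (2 * m - Suc i)" "2 * m - Suc i < 2 * m - i"
      using rev[of i] rev[of "Suc i"] by auto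
  next
    show "\<sigma> (2 * m - (m - 1)) < 2 * m - (m - 1)" using rev[of "m - 1"] assms(2) by auto
  qed (use assms(2) in auto)
  then show ?thesis unfolding has_nesting_def by blast
qed

lemma has_nesting_loop_nesting:
  assumes "\<sigma> \<in> loop_nestings m x" "m \<ge> 1"
  shows "has_nesting (2 * m) \<sigma> m"
proof -
  have arc: "\<sigma> (skip x (Suc i)) = skip x (2 * m - Suc i)" if "i < m" for i
    using assms(1) that unfolding loop_nestings_def by auto
  have "upper_nesting (2 * m) \<sigma> m (\<lambda>j. skip x (j + 1))"
    unfolding upper_nesting_def
  proof (intro conjI allI impI)
    fix i assume i: "Suc i < m"
    show "skip x (i + 1) < skip x (Suc i + 1)" by (rule skip_strict_mono) simp
    have "skip x (2 * m - Suc (Suc i)) < skip x (2 * m - Suc i)"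
      by (rule skip_strict_mono) (use i in auto)
    then show "\<sigma> (skip x (Suc i + 1)) < \<sigma> (skip x (i + 1))" using arc[of i] arc[of "Suc i"] i by simp
  next
    fix i assume "i < m"
    then show "skip x (i + 1) \<in> {1..2 * m}" using skip_bounds[where x = x and j = "i + 1"] by auto
  next
    show "skip x (m - 1 + 1) \<le> \<sigma> (skip x (m - 1 + 1))"
      using arc[of "m - 1"] assms(2) by (simp add: mult_2)
  qed (use assms(2) in auto)
  then show ?thesis unfolding has_nesting_def by blast
qed

lemma even_max_nesting_permutations:
  assumes m: "m \<ge> 1"
  shows "{\<sigma>. \<sigma> permutes {1..2 * m} \<and> has_nesting (2 * m) \<sigma> m}
    = upper_reversals m \<union> lower_reversals m \<union> (\<Union>x\<in>{1..2 * m}. loop_nestings m x)"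
    (is "?N = ?F")
proof
  show "?N \<subseteq> ?F"
  proof
    fix \<sigma> assume "\<sigma> \<in> ?N"
    then obtain a where p: "\<sigma> permutes {1..2 * m}"
      and "upper_nesting (2 * m) \<sigma> m a \<or> lower_nesting (2 * m) \<sigma> m a"
      unfolding has_nesting_def by blast
    then show "\<sigma> \<in> ?F"
      using upper_nesting_even_max_cases[OF _ p m] lower_nesting_even_max[OF _ p] by blast
  qed
next
  show "?F \<subseteq> ?N"
    using has_nesting_upper_reversal has_nesting_lower_reversal has_nesting_loop_nesting m
    unfolding upper_reversals_def lower_reversals_def loop_nestings_def by blast
qed

lemma card_upper_reversals: "card (upper_reversals m) = fact m"
proof -
  have "card (upper_reversals m) = fact (card {1..2 * m} - card {1..m})"
    unfolding upper_reversals_def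
    by (rule card_permutes_mapping[where g = "\<lambda>j. j" and h = "\<lambda>j. 2 * m + 1 - j"])
      (auto simp: inj_on_def)
  then show ?thesis by simp
qed

lemma card_lower_reversals: "card (lower_reversals m) = fact m"
proof -
  have "card (lower_reversals m) = fact (card {1..2 * m} - card {1..m})"
    unfolding lower_reversals_def
    by (rule card_permutes_mapping[where g = "\<lambda>j. 2 * m + 1 - j" and h = "\<lambda>j. j"])
      (auto simp: inj_on_def)
  then show ?thesis by simp
qed

lemma card_loop_nestings: "card (loop_nestings m x) = fact m"
proof -
  have "card (loop_nestings m x) = fact (card {1..2 * m} - card {1..m})"
    unfolding loop_nestings_def
  proof (rule card_permutes_mapping)
    have skip_in: "skip x j \<in> {1..2 * m}" if "j \<in> {1..2 * m - 1}" for j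
      using skip_bounds[where x = x and j = j] that by auto
    then show "skip x ` {1..m} \<subseteq> {1..2 * m}" by auto
    show "(\<lambda>j. skip x (2 * m - j)) ` {1..m} \<subseteq> {1..2 * m}"
    proof (rule image_subsetI)
      fix j assume "j \<in> {1..m}"
      then have "2 * m - j \<in> {1..2 * m - 1}" by auto
      then show "skip x (2 * m - j) \<in> {1..2 * m}" by (rule skip_in)
    qed
    show "inj_on (skip x) {1..m}" "inj_on (\<lambda>j. skip x (2 * m - j)) {1..m}"
      by (auto intro!: inj_onI simp: inj_eq[OF inj_skip])
  qed simp
  then show ?thesis by simp
qed

lemma card_upper_reversals_Int_lower_reversals: "card (upper_reversals m \<inter> lower_reversals m) = 1"
proof -
  have "upper_reversals m \<inter> lower_reversals m
      = {\<sigma>. \<sigma> permutes {1..2 * m} \<and> (\<forall>j\<in>{1..2 * m}. \<sigma> j = 2 * m + 1 - j)}"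
  proof -
    have "(\<forall>j\<in>{1..m}. \<sigma> j = 2 * m + 1 - j) \<and> (\<forall>j\<in>{1..m}. \<sigma> (2 * m + 1 - j) = j)
        \<longleftrightarrow> (\<forall>j\<in>{1..2 * m}. \<sigma> j = 2 * m + 1 - j)" for \<sigma> :: "nat \<Rightarrow> nat"
    proof safe
      fix j assume up: "\<forall>j\<in>{1..m}. \<sigma> j = 2 * m + 1 - j" and low: "\<forall>j\<in>{1..m}. \<sigma> (2 * m + 1 - j) = j"
        and j: "j \<in> {1..2 * m}"
      show "\<sigma> j = 2 * m + 1 - j"
      proof (cases "j \<le> m")
        case False
        then have "2 * m + 1 - j \<in> {1..m}" "2 * m + 1 - (2 * m + 1 - j) = j" using j by auto
        then show ?thesis using low by metis
      qed (use up j in auto)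
    next
      fix j assume rev: "\<forall>j\<in>{1..2 * m}. \<sigma> j = 2 * m + 1 - j" and j: "j \<in> {1..m}"
      then show "\<sigma> j = 2 * m + 1 - j" by auto
      have "2 * m + 1 - j \<in> {1..2 * m}" "2 * m + 1 - (2 * m + 1 - j) = j" using j by auto
      then show "\<sigma> (2 * m + 1 - j) = j" using rev by metis
    qed
    then show ?thesis unfolding upper_reversals_def lower_reversals_def by blast
  qed
  also have "card \<dots> = fact (card {1..2 * m} - card {1..2 * m})"
    by (rule card_permutes_mapping[where g = "\<lambda>j. j" and h = "\<lambda>j. 2 * m + 1 - j"])
      (auto simp: inj_on_def)
  finally show ?thesis by simp
qed

text \<open>A permutation lies in both families iff it fixes \<open>m\<close> and \<open>m + 1\<close> and maps each
  \<open>j < m\<close> to \<open>2m + 1 - j\<close>.\<close>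

lemma card_loop_nestings_middle_Int:
  assumes m: "m \<ge> 1"
  shows "card (loop_nestings m m \<inter> loop_nestings m (Suc m)) = fact (m - 1)"
proof -
  define G where "G j = (if j \<ge> m then j else 2 * m + 1 - j)" for j
  have "loop_nestings m m \<inter> loop_nestings m (Suc m)
      = {\<sigma>. \<sigma> permutes {1..2 * m} \<and> (\<forall>j\<in>{1..Suc m}. \<sigma> j = G j)}"
  proof (intro set_eqI iffI)
    fix \<sigma> assume \<sigma>: "\<sigma> \<in> loop_nestings m m \<inter> loop_nestings m (Suc m)"
    have "\<sigma> j = G j" if j: "j \<in> {1..Suc m}" for j
    proof -
      consider "j < m" | "j = m" | "j = Suc m" using j by fastforce
      then show ?thesis
      proof cases
        case 1
        then show ?thesis
          using \<sigma> by (intro loop_nestings_apply[of \<sigma> m m j]) (use j in \<open>auto simp: skip_def G_def\<close>)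
      next
        case 2
        then show ?thesis
          using \<sigma> by (intro loop_nestings_apply[of \<sigma> m "Suc m" j]) (use m in \<open>auto simp: skip_def G_def\<close>)
      next
        case 3
        then show ?thesis
          using \<sigma> by (intro loop_nestings_apply[of \<sigma> m m m]) (use m in \<open>auto simp: skip_def G_def\<close>)
      qed
    qed
    then show "\<sigma> \<in> {\<sigma>. \<sigma> permutes {1..2 * m} \<and> (\<forall>j\<in>{1..Suc m}. \<sigma> j = G j)}"
      using \<sigma> by (auto simp: loop_nestings_def)
  next
    fix \<sigma> assume "\<sigma> \<in> {\<sigma>. \<sigma> permutes {1..2 * m} \<and> (\<forall>j\<in>{1..Suc m}. \<sigma> j = G j)}"
    then have p: "\<sigma> permutes {1..2 * m}" and g: "\<forall>j\<in>{1..Suc m}. \<sigma> j = G j" by auto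
    have "\<sigma> (skip x j) = skip x (2 * m - j)" if x: "x \<in> {m, Suc m}" and j: "j \<in> {1..m}" for x j
    proof (cases "j < m")
      case True
      then show ?thesis using g[rule_format, of j] j x by (auto simp: skip_def G_def)
    next
      case False
      then have "j = m" using j by auto
      then show ?thesis using g[rule_format, of m] g[rule_format, of "Suc m"] x m
        by (auto simp: skip_def G_def mult_2)
    qed
    then show "\<sigma> \<in> loop_nestings m m \<inter> loop_nestings m (Suc m)"
      using p by (simp add: loop_nestings_def)
  qed
  also have "card \<dots> = fact (card {1..2 * m} - card {1..Suc m})"
  proof (rule card_permutes_mapping[where g = "\<lambda>j. j"])
    show "G ` {1..Suc m} \<subseteq> {1..2 * m}" using m by (auto simp: G_def)
    show "inj_on G {1..Suc m}" by (auto simp: inj_on_def G_def split: if_splits)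
  qed (use m in auto)
  finally show ?thesis by simp
qed

text \<open>A permutation in \<open>loop_nestings m x\<close> fixes \<open>skip x m\<close>, which is \<open>m + 1\<close> or \<open>m\<close>,
  while both reversals move \<open>m\<close> and \<open>m + 1\<close>.\<close>

lemma upper_reversals_Int_loop_nestings:
  assumes m: "m \<ge> 1"
  shows "upper_reversals m \<inter> loop_nestings m x = {}"
proof (intro equals0I)
  fix \<sigma> assume \<sigma>: "\<sigma> \<in> upper_reversals m \<inter> loop_nestings m x"
  have fix_loop: "\<sigma> (skip x m) = skip x m"
    using \<sigma> m by (intro loop_nestings_apply[of \<sigma> m x m]) (auto simp: mult_2)
  have up: "\<sigma> m = Suc m" using \<sigma> m unfolding upper_reversals_def by auto
  show False
  proof (cases "x \<le> m")
    case True
    then have "\<sigma> (Suc m) = \<sigma> m" using fix_loop up by (simp add: skip_def)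
    moreover have "inj \<sigma>" using \<sigma> permutes_inj unfolding upper_reversals_def by blast
    ultimately show False by (auto dest: injD)
  next
    case False
    then show False using fix_loop up by (simp add: skip_def)
  qed
qed

lemma lower_reversals_Int_loop_nestings:
  assumes m: "m \<ge> 1"
  shows "lower_reversals m \<inter> loop_nestings m x = {}"
proof (intro equals0I)
  fix \<sigma> assume \<sigma>: "\<sigma> \<in> lower_reversals m \<inter> loop_nestings m x"
  have fix_loop: "\<sigma> (skip x m) = skip x m"
    using \<sigma> m by (intro loop_nestings_apply[of \<sigma> m x m]) (auto simp: mult_2)
  have low: "\<sigma> (Suc m) = m"
    using \<sigma> m unfolding lower_reversals_def by (auto dest: bspec[of _ _ m] simp: mult_2)
  show False
  proof (cases "x \<le> m")
    case True
    then show False using fix_loop low by (simp add: skip_def)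
  next
    case False
    then have "\<sigma> m = \<sigma> (Suc m)" using fix_loop low by (simp add: skip_def)
    moreover have "inj \<sigma>" using \<sigma> permutes_inj unfolding lower_reversals_def by blast
    ultimately show False by (auto dest: injD)
  qed
qed

lemma loop_nestings_disjoint_ordered:
  assumes p: "\<sigma> permutes {1..2 * m}" and m: "m \<ge> 1"
    and xy: "x < y" "1 \<le> x" "y \<le> 2 * m" "\<not> (x = m \<and> y = Suc m)"
    and \<sigma>x: "\<sigma> \<in> loop_nestings m x" and \<sigma>y: "\<sigma> \<in> loop_nestings m y"
  shows False
proof -
  have inj: "inj \<sigma>" using permutes_inj[OF p] .
  consider "y \<le> m" | "x \<ge> Suc m" | "x < m" "y \<ge> Suc m" | "x = m" "y \<ge> Suc (Suc m)"
    using xy by linarith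
  then show False
  proof cases
    case 1
    have "\<sigma> y = 2 * m + 2 - y"
      by (rule loop_nestings_apply[OF \<sigma>x, of "y - 1"]) (use 1 xy in \<open>auto simp: skip_def\<close>)
    moreover have "\<sigma> (y - 1) = 2 * m + 2 - y"
      by (rule loop_nestings_apply[OF \<sigma>y, of "y - 1"]) (use 1 xy in \<open>auto simp: skip_def\<close>)
    ultimately show False using injD[OF inj, of y "y - 1"] xy by simp
  next
    case 2
    have "\<sigma> (2 * m - x) = Suc x"
      by (rule loop_nestings_apply[OF \<sigma>x, of "2 * m - x"]) (use 2 xy in \<open>auto simp: skip_def\<close>)
    moreover have "\<sigma> (2 * m - x) = x"
      by (rule loop_nestings_apply[OF \<sigma>y, of "2 * m - x"]) (use 2 xy in \<open>auto simp: skip_def\<close>)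
    ultimately show False by simp
  next
    case 3
    have "\<sigma> m = m + 2"
      by (rule loop_nestings_apply[OF \<sigma>x, of "m - 1"]) (use 3 xy in \<open>auto simp: skip_def\<close>)
    moreover have "\<sigma> m = m"
      by (rule loop_nestings_apply[OF \<sigma>y, of m]) (use 3 xy m in \<open>auto simp: skip_def\<close>)
    ultimately show False by simp
  next
    case 4
    have "\<sigma> (Suc m) = Suc m"
      by (rule loop_nestings_apply[OF \<sigma>x, of m]) (use 4 xy m in \<open>auto simp: skip_def\<close>)
    moreover have "\<sigma> (m - 1) = Suc m"
      by (rule loop_nestings_apply[OF \<sigma>y, of "m - 1"]) (use 4 xy in \<open>auto simp: skip_def\<close>)
    ultimately show False using injD[OF inj, of "Suc m" "m - 1"] by simp
  qed
qed

lemma loop_nestings_disjoint: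
  assumes m: "m \<ge> 1" and xy: "x \<noteq> y" "x \<in> {1..2 * m}" "y \<in> {1..2 * m}" "{x, y} \<noteq> {m, Suc m}"
  shows "loop_nestings m x \<inter> loop_nestings m y = {}"
proof (intro equals0I)
  fix \<sigma> assume \<sigma>: "\<sigma> \<in> loop_nestings m x \<inter> loop_nestings m y"
  then have p: "\<sigma> permutes {1..2 * m}" by (simp add: loop_nestings_def)
  show False
  proof (cases "x < y")
    case True
    show False by (rule loop_nestings_disjoint_ordered[OF p m True]) (use xy \<sigma> in auto)
  next
    case False
    then have "y < x" using xy by simp
    show False by (rule loop_nestings_disjoint_ordered[OF p m \<open>y < x\<close>]) (use xy \<sigma> in auto)
  qed
qed

lemma NE_even_max:
  assumes m: "m \<ge> 1"
  shows "NE (2 * m) m = 2 * fact (m + 1) - fact (m - 1) - 1"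
proof -
  let ?U = "upper_reversals m" and ?L = "lower_reversals m" and ?F = "loop_nestings m"
  define X where "X = {1..2 * m} - {m, Suc m}"
  have fin: "finite ?U" "finite ?L" "\<And>x. finite (?F x)"
    using card_upper_reversals card_lower_reversals card_loop_nestings
    by (metis card.infinite fact_nonzero)+
  have "{1..2 * m} = {m, Suc m} \<union> X" unfolding X_def using m by auto
  then have "NE (2 * m) m = card ((?U \<union> ?L) \<union> ((?F m \<union> ?F (Suc m)) \<union> (\<Union>x\<in>X. ?F x)))"
    using NE_max_eq_card[of "2 * m"] even_max_nesting_permutations[OF m] m by (simp add: Un_assoc)
  also have "\<dots> = card (?U \<union> ?L) + (card (?F m \<union> ?F (Suc m)) + card (\<Union>x\<in>X. ?F x))"
  proof -
    have "(?F m \<union> ?F (Suc m)) \<inter> (\<Union>x\<in>X. ?F x) = {}"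
      using loop_nestings_disjoint[OF m] m unfolding X_def by fastforce
    moreover have "(?U \<union> ?L) \<inter> ((?F m \<union> ?F (Suc m)) \<union> (\<Union>x\<in>X. ?F x)) = {}"
      using upper_reversals_Int_loop_nestings[OF m] lower_reversals_Int_loop_nestings[OF m] by blast
    ultimately show ?thesis
      using fin unfolding X_def by (simp add: card_Un_disjoint)
  qed
  also have "card (?U \<union> ?L) = 2 * fact m - 1"
    using card_Un_Int[OF fin(1,2)] card_upper_reversals card_lower_reversals
      card_upper_reversals_Int_lower_reversals by simp
  also have "card (?F m \<union> ?F (Suc m)) = 2 * fact m - fact (m - 1)"
    using card_Un_Int[OF fin(3) fin(3), of m "Suc m"] card_loop_nestings card_loop_nestings_middle_Int[OF m] by simp
  also have "card (\<Union>x\<in>X. ?F x) = (2 * m - 2) * fact m"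
  proof -
    have "card (\<Union>x\<in>X. ?F x) = (\<Sum>x\<in>X. card (?F x))"
      using fin(3) loop_nestings_disjoint[OF m] unfolding X_def
      by (intro card_UN_disjoint) (auto simp: doubleton_eq_iff)
    moreover have "card X = 2 * m - 2" using m unfolding X_def by (simp add: card_Diff_subset)
    ultimately show ?thesis using card_loop_nestings by simp
  qed
  finally have "NE (2 * m) m = (2 * fact m - 1) + ((2 * fact m - fact (m - 1)) + (2 * m - 2) * fact m)" .
  moreover have "fact (m - 1) \<le> (fact m :: nat)" "1 \<le> (fact m :: nat)" "2 * fact m \<le> 2 * (m * fact m)"
    using m fact_mono_nat[of "m - 1" m] fact_ge_1[of m] by simp_all
  moreover have "fact (m + 1) = m * fact m + (fact m :: nat)" "(2 * m - 2) * fact m = 2 * (m * fact m) - 2 * fact m"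
    by (simp_all add: diff_mult_distrib)
  ultimately show ?thesis by linarith
qed

theorem theorem2:
  fixes n :: nat
  assumes "n \<ge> 1"
  shows "NE n ((n + 1) div 2) =
    (if odd n then fact ((n - 1) div 2)
     else 2 * fact (n div 2 + 1) - fact (n div 2 - 1) - 1)"
proof (cases "odd n")
  case True
  then obtain m where "n = 2 * m + 1" using oddE by blast
  then show ?thesis using NE_odd_max[of m] by simp
next
  case False
  then obtain m where n: "n = 2 * m" using evenE by blast
  then have "m \<ge> 1" using assms by simp
  then show ?thesis using NE_even_max[of m] n by simp
qed

end
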